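(* $\mathsf{UCQ}(\mathsf{BID})\subsetneq\mathsf{FO}(\mathsf{BID})$.
   Context: Fix a countably infinite universe $U$. A database schema is a finite nonempty set of relation symbols with arities; facts are $R(u_1,\dots,u_{\mathrm{ar}(R)})$ with $u_i\in U$; an instance is a finite set of facts; $\mathrm{adom}(D)$ is the set of elements of $U$ occurring in $D$. A probabilistic database (PDB) is a discrete probability space $(\mathbb D,P)$ with $\mathbb D$ a nonempty countable set of instances; $\mathrm{facts}(\mathcal D)$ is the union of its instances of positive probability. A PDB $\mathcal I$ is block-independent disjoint ($\mathsf{BID}$) if $\mathrm{facts}(\mathcal I)$ can be partitioned into blocks such that for facts $f_1,\dots,f_k$ from pairwise different blocks $\Pr(f_1\in I,\dots,f_k\in I)=\prod_i\Pr(f_i\in I)$, and distinct facts $f,f'$ of the same block satisfy $\Pr(f\in I\text{ and }f'\in I)=0$. First-order formulas use relational atoms $R(\bar u)$ ($\bar u$ variables or constants) and equality atoms and are evaluated under active domain semantics (quantifiers range over $\mathrm{adom}(D)$ and the formula's constants). A union of conjunctive queries (UCQ) is a formula built from atoms using only $\exists,\wedge,\vee$. An FO-view (UCQ-view) consists of one first-order (UCQ) formula $\Phi_R(x_1,\dots,x_{\mathrm{ar}(R)})$ per output relation $R$, mapping $D$ to the instance of all $R(\bar a)$ with $\bar a$ over $\mathrm{adom}(D)\cup\mathrm{adom}(\Phi_R)$ and $D\models\Phi_R[\bar a]$. The image of a PDB $(\mathbb D,P)$ under a view $V$ is the PDB on $V(\mathbb D)$ with $P'(\{D'\})=P(\{D:V(D)=D'\})$.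 $\mathsf{UCQ}(\mathsf{BID})$ and $\mathsf{FO}(\mathsf{BID})$ are the classes of images of BID-PDBs under UCQ-views and FO-views, respectively. *)

theory Defs
  imports "HOL-Probability.Probability" "HOL-Library.Countable" "HOL-Library.Infinite_Typeclass"
begin

text \<open>A relation symbol is a pair (name, arity). The universe U is a type 'u of
  class countable and infinite.\<close>
type_synonym rel = "nat \<times> nat"

definition arity :: "rel \<Rightarrow> nat" where "arity R = snd R"

definition schema :: "rel set \<Rightarrow> bool" where
  "schema S \<longleftrightarrow> finite S \<and> S \<noteq> {}"

type_synonym 'u fact = "rel \<times> 'u list"

definition fact_over :: "rel set \<Rightarrow> 'u fact \<Rightarrow> bool" where
  "fact_over S f \<longleftrightarrow> fst f \<in> S \<and> length (snd f) = arity (fst f)"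

definition instance_over :: "rel set \<Rightarrow> 'u fact set \<Rightarrow> bool" where
  "instance_over S D \<longleftrightarrow> finite D \<and> (\<forall>f\<in>D. fact_over S f)"

definition adom :: "'u fact set \<Rightarrow> 'u set" where
  "adom D = (\<Union>f\<in>D. set (snd f))"

text \<open>A PDB over schema S is given by a discrete distribution on instances over S
  (the sample space is the support, which is countable and nonempty).\<close>
type_synonym 'u pdb = "rel set \<times> 'u fact set pmf"

definition is_pdb :: "'u pdb \<Rightarrow> bool" where
  "is_pdb \<D> \<longleftrightarrow> schema (fst \<D>) \<and> (\<forall>D\<in>set_pmf (snd \<D>). instance_over (fst \<D>) D)"

definition pdb_facts :: "'u fact set pmf \<Rightarrow> 'u fact set" where
  "pdb_facts P = \<Union>(set_pmf P)"

definition is_BID :: "'u pdb \<Rightarrow> bool" where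
  "is_BID \<D> \<longleftrightarrow> is_pdb \<D> \<and>
     (\<exists>B. (\<Union>B = pdb_facts (snd \<D>)) \<and> {} \<notin> B \<and>
          (\<forall>X\<in>B. \<forall>Y\<in>B. X \<noteq> Y \<longrightarrow> X \<inter> Y = {}) \<and>
          (\<forall>F. finite F \<and> F \<subseteq> pdb_facts (snd \<D>) \<and>
               (\<forall>f\<in>F. \<forall>f'\<in>F. \<forall>X\<in>B. f \<noteq> f' \<and> f \<in> X \<longrightarrow> f' \<notin> X) \<longrightarrow>
               measure_pmf.prob (snd \<D>) {I. F \<subseteq> I} =
               (\<Prod>f\<in>F. measure_pmf.prob (snd \<D>) {I. f \<in> I})) \<and>
          (\<forall>X\<in>B. \<forall>f\<in>X. \<forall>f'\<in>X. f \<noteq> f' \<longrightarrow>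
               measure_pmf.prob (snd \<D>) {I. f \<in> I \<and> f' \<in> I} = 0))"

datatype 'u trm = Var nat | Cst 'u

datatype 'u fo =
    Atom rel "'u trm list"
  | Eq "'u trm" "'u trm"
  | Neg "'u fo"
  | Conj "'u fo" "'u fo"
  | Disj "'u fo" "'u fo"
  | Ex nat "'u fo"
  | All nat "'u fo"

fun trm_consts :: "'u trm \<Rightarrow> 'u set" where
  "trm_consts (Var x) = {}"
| "trm_consts (Cst c) = {c}"

fun trm_vars :: "'u trm \<Rightarrow> nat set" where
  "trm_vars (Var x) = {x}"
| "trm_vars (Cst c) = {}"

fun fo_consts :: "'u fo \<Rightarrow> 'u set" where
  "fo_consts (Atom R ts) = (\<Union>t\<in>set ts. trm_consts t)"
| "fo_consts (Eq t1 t2) = trm_consts t1 \<union> trm_consts t2"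
| "fo_consts (Neg \<phi>) = fo_consts \<phi>"
| "fo_consts (Conj \<phi> \<psi>) = fo_consts \<phi> \<union> fo_consts \<psi>"
| "fo_consts (Disj \<phi> \<psi>) = fo_consts \<phi> \<union> fo_consts \<psi>"
| "fo_consts (Ex x \<phi>) = fo_consts \<phi>"
| "fo_consts (All x \<phi>) = fo_consts \<phi>"

fun fo_free :: "'u fo \<Rightarrow> nat set" where
  "fo_free (Atom R ts) = (\<Union>t\<in>set ts. trm_vars t)"
| "fo_free (Eq t1 t2) = trm_vars t1 \<union> trm_vars t2"
| "fo_free (Neg \<phi>) = fo_free \<phi>"
| "fo_free (Conj \<phi> \<psi>) = fo_free \<phi> \<union> fo_free \<psi>"
| "fo_free (Disj \<phi> \<psi>) = fo_free \<phi> \<union> fo_free \<psi>"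
| "fo_free (Ex x \<phi>) = fo_free \<phi> - {x}"
| "fo_free (All x \<phi>) = fo_free \<phi> - {x}"

fun fo_over :: "rel set \<Rightarrow> 'u fo \<Rightarrow> bool" where
  "fo_over S (Atom R ts) \<longleftrightarrow> R \<in> S \<and> length ts = arity R"
| "fo_over S (Eq t1 t2) \<longleftrightarrow> True"
| "fo_over S (Neg \<phi>) \<longleftrightarrow> fo_over S \<phi>"
| "fo_over S (Conj \<phi> \<psi>) \<longleftrightarrow> fo_over S \<phi> \<and> fo_over S \<psi>"
| "fo_over S (Disj \<phi> \<psi>) \<longleftrightarrow> fo_over S \<phi> \<and> fo_over S \<psi>"
| "fo_over S (Ex x \<phi>) \<longleftrightarrow> fo_over S \<phi>"
| "fo_over S (All x \<phi>) \<longleftrightarrow> fo_over S \<phi>"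

fun is_ucq :: "'u fo \<Rightarrow> bool" where
  "is_ucq (Atom R ts) \<longleftrightarrow> True"
| "is_ucq (Eq t1 t2) \<longleftrightarrow> True"
| "is_ucq (Neg \<phi>) \<longleftrightarrow> False"
| "is_ucq (Conj \<phi> \<psi>) \<longleftrightarrow> is_ucq \<phi> \<and> is_ucq \<psi>"
| "is_ucq (Disj \<phi> \<psi>) \<longleftrightarrow> is_ucq \<phi> \<and> is_ucq \<psi>"
| "is_ucq (Ex x \<phi>) \<longleftrightarrow> is_ucq \<phi>"
| "is_ucq (All x \<phi>) \<longleftrightarrow> False"

fun trm_eval :: "(nat \<Rightarrow> 'u) \<Rightarrow> 'u trm \<Rightarrow> 'u" where
  "trm_eval A (Var x) = A x"
| "trm_eval A (Cst c) = c"

fun sat :: "'u set \<Rightarrow> 'u fact set \<Rightarrow> (nat \<Rightarrow> 'u) \<Rightarrow> 'u fo \<Rightarrow> bool" where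
  "sat Dom D A (Atom R ts) \<longleftrightarrow> (R, map (trm_eval A) ts) \<in> D"
| "sat Dom D A (Eq t1 t2) \<longleftrightarrow> trm_eval A t1 = trm_eval A t2"
| "sat Dom D A (Neg \<phi>) \<longleftrightarrow> \<not> sat Dom D A \<phi>"
| "sat Dom D A (Conj \<phi> \<psi>) \<longleftrightarrow> sat Dom D A \<phi> \<and> sat Dom D A \<psi>"
| "sat Dom D A (Disj \<phi> \<psi>) \<longleftrightarrow> sat Dom D A \<phi> \<or> sat Dom D A \<psi>"
| "sat Dom D A (Ex x \<phi>) \<longleftrightarrow> (\<exists>a\<in>Dom. sat Dom D (A(x := a)) \<phi>)"
| "sat Dom D A (All x \<phi>) \<longleftrightarrow> (\<forall>a\<in>Dom. sat Dom D (A(x := a)) \<phi>)"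

definition sat_adom :: "'u fact set \<Rightarrow> 'u fo \<Rightarrow> 'u list \<Rightarrow> bool" where
  "sat_adom D \<phi> as \<longleftrightarrow> sat (adom D \<union> fo_consts \<phi>) D (\<lambda>i. as ! i) \<phi>"

definition fo_view :: "rel set \<Rightarrow> rel set \<Rightarrow> (rel \<Rightarrow> 'u fo) \<Rightarrow> bool" where
  "fo_view S T \<Phi> \<longleftrightarrow> schema T \<and>
     (\<forall>R\<in>T. fo_over S (\<Phi> R) \<and> fo_free (\<Phi> R) \<subseteq> {..<arity R})"

definition ucq_view :: "rel set \<Rightarrow> rel set \<Rightarrow> (rel \<Rightarrow> 'u fo) \<Rightarrow> bool" where
  "ucq_view S T \<Phi> \<longleftrightarrow> fo_view S T \<Phi> \<and> (\<forall>R\<in>T. is_ucq (\<Phi> R))"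

definition view_apply :: "rel set \<Rightarrow> (rel \<Rightarrow> 'u fo) \<Rightarrow> 'u fact set \<Rightarrow> 'u fact set" where
  "view_apply T \<Phi> D =
     {(R, as) | R as. R \<in> T \<and> length as = arity R \<and>
        set as \<subseteq> adom D \<union> fo_consts (\<Phi> R) \<and> sat_adom D (\<Phi> R) as}"

definition pdb_image :: "rel set \<Rightarrow> (rel \<Rightarrow> 'u fo) \<Rightarrow> 'u pdb \<Rightarrow> 'u pdb" where
  "pdb_image T \<Phi> \<D> = (T, map_pmf (view_apply T \<Phi>) (snd \<D>))"

definition UCQ_BID :: "'u pdb set" where
  "UCQ_BID = {pdb_image T \<Phi> \<I> | T \<Phi> \<I>. is_BID \<I> \<and> ucq_view (fst \<I>) T \<Phi>}"

definition FO_BID :: "'u pdb set" where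
  "FO_BID = {pdb_image T \<Phi> \<I> | T \<Phi> \<I>. is_BID \<I> \<and> fo_view (fst \<I>) T \<Phi>}"

end

(*
  UCQ views are monotone, and below each possible world D of a block-independent PDB there is a
  possible world whose size is bounded independently of D: a fact whose block is empty with
  positive probability can be deleted from D without leaving the support, by independence of the
  blocks; once only facts of almost surely non-empty blocks remain, the world has at most one fact
  in each such block while every possible world has at least one, so it is no larger than any
  fixed possible world. Hence below each possible world of a UCQ(BID) PDB there is one with a
  bounded active domain.
  The FO-view that copies a random successor chain and marks its first node, its last node and
  whether it is empty destroys this: the only possible world of the image below the marked chain of
  length n is that chain itself. The chain is tuple-independent with edge probabilities
  1 / (2^(k+2) - 1), chosen so that the maximum of the chain is geometrically distributed, which
  gives an explicit construction of its law.
*)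
theory Submission
  imports Defs
begin

section \<open>Independent random subsets of the naturals\<close>

definition indep_subset_pmf :: "('a \<Rightarrow> real) \<Rightarrow> 'a set \<Rightarrow> 'a set pmf" where
  "indep_subset_pmf p I = map_pmf (\<lambda>b. {k\<in>I. b k}) (Pi_pmf I False (\<lambda>k. bernoulli_pmf (p k)))"

lemma set_indep_subset_pmf: "S \<in> set_pmf (indep_subset_pmf p I) \<Longrightarrow> S \<subseteq> I"
  by (auto simp: indep_subset_pmf_def)

lemma top_in_set_indep_subset_pmf:
  assumes "finite I" "\<And>k. k \<in> I \<Longrightarrow> 0 < p k \<and> p k \<le> 1"
  shows "I \<in> set_pmf (indep_subset_pmf p I)"
proof -
  have "(\<lambda>k. k \<in> I) \<in> set_pmf (Pi_pmf I False (\<lambda>k. bernoulli_pmf (p k)))"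
    using assms by (force simp: set_Pi_pmf PiE_dflt_def set_pmf_iff pmf_bernoulli_True)
  then show ?thesis unfolding indep_subset_pmf_def by force
qed

lemma prob_superset_indep_subset_pmf:
  assumes "finite I" "\<And>k. 0 \<le> p k \<and> p k \<le> 1"
  shows "measure_pmf.prob (indep_subset_pmf p I) {S. K \<subseteq> S} = (if K \<subseteq> I then \<Prod>k\<in>K. p k else 0)"
proof (cases "K \<subseteq> I")
  case True
  have "(\<lambda>b. {k\<in>I. b k}) -` {S. K \<subseteq> S} = Pi I (\<lambda>k. if k \<in> K then {True} else UNIV)"
    using True by (force simp: Pi_iff)
  then have "measure_pmf.prob (indep_subset_pmf p I) {S. K \<subseteq> S} =
      (\<Prod>k\<in>I. measure_pmf.prob (bernoulli_pmf (p k)) (if k \<in> K then {True} else UNIV))"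
    unfolding indep_subset_pmf_def measure_map_pmf using assms(1) by (simp add: measure_Pi_pmf_Pi)
  also have "\<dots> = (\<Prod>k\<in>I. if k \<in> K then p k else 1)"
    using assms(2) by (intro prod.cong) (auto simp: measure_pmf_single)
  also have "\<dots> = (\<Prod>k\<in>K. p k)"
    using True assms(1) by (simp add: prod.If_cases Int_absorb1)
  finally show ?thesis using True by simp
next
  case False
  then have "(\<lambda>b. {k\<in>I. b k}) -` {S. K \<subseteq> S} = {}" by auto
  then show ?thesis using False unfolding indep_subset_pmf_def measure_map_pmf by simp
qed

lemma prob_geometric_pmf_atLeast:
  assumes "0 < p" "p \<le> 1"
  shows "measure_pmf.prob (geometric_pmf p) {a..} = (1 - p) ^ a"
proof -
  have "measure_pmf.prob (geometric_pmf p) {a..} = 1 - measure_pmf.prob (geometric_pmf p) {..<a}"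
    using measure_pmf.prob_compl[of "{..<a}" "geometric_pmf p"]
    by (simp add: Compl_eq_Diff_UNIV[symmetric] not_less atLeast_def)
  also have "measure_pmf.prob (geometric_pmf p) {..<a} = (\<Sum>j<a. (1 - p) ^ j * p)"
    using assms by (simp add: measure_measure_pmf_finite)
  also have "\<dots> = 1 - (1 - p) ^ a"
    using assms by (simp add: sum_distrib_right[symmetric] sum_gp_strict)
  finally show ?thesis by simp
qed

lemma measure_pmf_prob_bind_pmf:
  "measure_pmf.prob (bind_pmf M f) X = (\<integral>x. measure_pmf.prob (f x) X \<partial>M)"
  unfolding measure_pmf_bind
  by (rule measure_pmf.measure_bind[where N="count_space UNIV"])
     (auto simp: space_subprob_algebra measure_pmf.subprob_space_axioms)

lemma integral_indicator_combination_pmf: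
  "(\<integral>x. a * indicator A x + b * indicator B x \<partial>measure_pmf M) =
     a * measure_pmf.prob M A + (b::real) * measure_pmf.prob M B"
  by (subst Bochner_Integration.integral_add)
     (auto intro!: integrable_real_indicator simp: measure_pmf.emeasure_finite less_top[symmetric])

definition edge_prob :: "nat \<Rightarrow> real" where
  "edge_prob k = 1 / (2 ^ (k + 2) - 1)"

lemma edge_prob_pos: "0 < edge_prob k" and edge_prob_le_1: "edge_prob k \<le> 1"
proof -
  have "(2::real) \<le> 2 ^ (k + 2)"
    using power_increasing[of 1 "k + 2" "2::real"] by simp
  then show "0 < edge_prob k" "edge_prob k \<le> 1"
    unfolding edge_prob_def by (auto simp: divide_le_eq)
qed

lemma edge_prob_fixpoint: "(1 / 2) ^ (k + 2) * (1 + edge_prob k) = edge_prob k"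
proof -
  have "(1::real) \<le> 2 ^ k" by simp
  then have "(1::real) < 4 * 2 ^ k" by linarith
  then show ?thesis unfolding edge_prob_def by (simp add: field_simps power_one_over)
qed

definition subset_with_max_pmf :: "nat \<Rightarrow> nat set pmf" where
  "subset_with_max_pmf m = map_pmf (insert m) (indep_subset_pmf edge_prob {..<m})"

text \<open>A random subset of \<open>\<nat>\<close> containing each \<open>k\<close> independently with probability
  \<open>edge_prob k\<close> is almost surely finite, and its maximum is \<open>m\<close> with probability \<open>(1/2) ^ (m + 2)\<close>.
  So its law is the discrete distribution obtained by drawing \<open>1 + max\<close> (\<open>0\<close> for the empty set)
  from a geometric distribution first; \<open>edge_prob_fixpoint\<close> is the identity behind this.\<close>
definition chain_subset_pmf :: "nat set pmf" where
  "chain_subset_pmf = bind_pmf (geometric_pmf (1 / 2))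
     (\<lambda>j. case j of 0 \<Rightarrow> return_pmf {} | Suc m \<Rightarrow> subset_with_max_pmf m)"

lemma finite_set_chain_subset_pmf:
  assumes "A \<in> set_pmf chain_subset_pmf"
  shows "finite A"
proof -
  obtain j where "A \<in> set_pmf (case j of 0 \<Rightarrow> return_pmf {} | Suc m \<Rightarrow> subset_with_max_pmf m)"
    using assms unfolding chain_subset_pmf_def by auto
  then show ?thesis
    by (cases j) (auto simp: subset_with_max_pmf_def dest!: set_indep_subset_pmf
        intro: finite_subset[OF _ finite_lessThan])
qed

lemma lessThan_in_set_chain_subset_pmf: "{..<n} \<in> set_pmf chain_subset_pmf"
proof -
  have "{..<n} \<in> set_pmf (case n of 0 \<Rightarrow> return_pmf {} | Suc m \<Rightarrow> subset_with_max_pmf m)"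
  proof (cases n)
    case (Suc m)
    have "{..<m} \<in> set_pmf (indep_subset_pmf edge_prob {..<m})"
      using edge_prob_pos edge_prob_le_1 by (intro top_in_set_indep_subset_pmf) auto
    moreover have "{..<n} = insert m {..<m}" using Suc by auto
    ultimately show ?thesis using Suc by (simp add: subset_with_max_pmf_def)
  qed simp
  moreover have "n \<in> set_pmf (geometric_pmf (1 / 2))" by (simp add: set_pmf_geometric)
  ultimately show ?thesis unfolding chain_subset_pmf_def set_bind_pmf by blast
qed

lemma prob_superset_subset_with_max_pmf:
  assumes "finite K" "K \<noteq> {}"
  shows "measure_pmf.prob (subset_with_max_pmf i) {A. K \<subseteq> A} =
    (if i < Max K then 0 else if i = Max K then \<Prod>k\<in>K - {i}. edge_prob k else \<Prod>k\<in>K. edge_prob k)"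
proof -
  have "measure_pmf.prob (subset_with_max_pmf i) {A. K \<subseteq> A}
      = measure_pmf.prob (indep_subset_pmf edge_prob {..<i}) {S. K - {i} \<subseteq> S}"
    by (simp add: subset_with_max_pmf_def vimage_def Diff_subset_conv)
  also have "\<dots> = (if K - {i} \<subseteq> {..<i} then \<Prod>k\<in>K - {i}. edge_prob k else 0)"
    by (rule prob_superset_indep_subset_pmf) (use edge_prob_pos edge_prob_le_1 less_imp_le in auto)
  also have "\<dots> = (if i < Max K then 0
      else if i = Max K then \<Prod>k\<in>K - {i}. edge_prob k else \<Prod>k\<in>K. edge_prob k)"
  proof -
    have max: "Max K \<in> K" "\<And>k. k \<in> K \<Longrightarrow> k \<le> Max K" using assms by auto
    consider "i < Max K" | "i = Max K" | "Max K < i" by linarith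
    then show ?thesis
    proof cases
      case 1
      then have "\<not> K - {i} \<subseteq> {..<i}" using max(1) by auto
      then show ?thesis using 1 by simp
    next
      case 2
      then have "K - {i} \<subseteq> {..<i}" using max(2) by fastforce
      then show ?thesis using 2 by simp
    next
      case 3
      then have "K - {i} = K" "K \<subseteq> {..<i}" using max(2) by fastforce+
      then show ?thesis using 3 by simp
    qed
  qed
  finally show ?thesis .
qed

lemma prob_superset_chain_subset_pmf:
  assumes "finite K"
  shows "measure_pmf.prob chain_subset_pmf {A. K \<subseteq> A} = (\<Prod>k\<in>K. edge_prob k)"
proof (cases "K = {}")
  case False
  define m where "m = Max K"
  define c where "c = (\<Prod>k\<in>K - {m}. edge_prob k)"
  have prod_K: "(\<Prod>k\<in>K. edge_prob k) = edge_prob m * c"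
    unfolding c_def m_def using assms False by (simp add: prod.remove)
  have prob_given_max:
    "measure_pmf.prob (case j of 0 \<Rightarrow> return_pmf {} | Suc i \<Rightarrow> subset_with_max_pmf i) {A. K \<subseteq> A}
      = c * indicator {Suc m} j + edge_prob m * c * indicator {Suc (Suc m)..} j" for j
    using False prod_K
    by (cases j) (auto simp: prob_superset_subset_with_max_pmf[OF assms False] c_def m_def indicator_def)
  have "measure_pmf.prob chain_subset_pmf {A. K \<subseteq> A} =
      c * (1 / 2) ^ (m + 2) + edge_prob m * c * (1 / 2) ^ (m + 2)"
    unfolding chain_subset_pmf_def measure_pmf_prob_bind_pmf prob_given_max
      integral_indicator_combination_pmf
    by (simp add: measure_pmf_single prob_geometric_pmf_atLeast)
  also have "\<dots> = c * ((1 / 2) ^ (m + 2) * (1 + edge_prob m))"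
    by (simp add: algebra_simps)
  also have "\<dots> = c * edge_prob m"
    by (simp only: edge_prob_fixpoint)
  finally show ?thesis using prod_K by simp
qed simp

section \<open>Block-independent probabilistic databases\<close>

definition cylinders :: "'a set \<Rightarrow> 'a set set set" where
  "cylinders Y = {{I. F \<subseteq> I} | F. finite F \<and> F \<subseteq> Y}"

lemma Int_stable_cylinders: "Int_stable (cylinders Y)"
proof (rule Int_stableI)
  fix a b assume "a \<in> cylinders Y" "b \<in> cylinders Y"
  then obtain F G where "a = {I. F \<subseteq> I}" "b = {I. G \<subseteq> I}" "finite (F \<union> G)" "F \<union> G \<subseteq> Y"
    unfolding cylinders_def by auto
  moreover have "{I. F \<subseteq> I} \<inter> {I. G \<subseteq> I} = {I. F \<union> G \<subseteq> I}" by auto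
  ultimately show "a \<inter> b \<in> cylinders Y" unfolding cylinders_def by blast
qed

lemma trace_in_sigma_cylinders:
  fixes Y :: "'a::countable set"
  assumes "G \<subseteq> Y"
  shows "{I. I \<inter> Y = G} \<in> sigma_sets UNIV (cylinders Y)"
proof -
  have member: "{I. y \<in> I} \<in> sigma_sets UNIV (cylinders Y)" if "y \<in> Y" for y
  proof -
    have "{I. y \<in> I} = {I. {y} \<subseteq> I}" by auto
    then show ?thesis using that unfolding cylinders_def by (auto intro!: sigma_sets.Basic)
  qed
  have "{I. I \<inter> Y = G} = (\<Inter>y\<in>Y. if y \<in> G then {I. y \<in> I} else UNIV - {I. y \<in> I})"
    using assms by auto
  also have "\<dots> \<in> sigma_sets UNIV (cylinders Y)"
  proof (rule sigma_algebra.countable_INT'')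
    show "sigma_algebra UNIV (sigma_sets UNIV (cylinders Y))"
      by (rule sigma_algebra_sigma_sets) simp
  qed (auto intro: member sigma_sets.Compl sigma_sets_top)
  finally show ?thesis .
qed

text \<open>The conditions of \<^const>\<open>is_BID\<close> for a fixed partition \<open>B\<close>.\<close>
locale block_independent =
  fixes P :: "('u::countable) fact set pmf" and B :: "'u fact set set"
  assumes finite_instances: "\<And>D. D \<in> set_pmf P \<Longrightarrow> finite D"
    and blocks_cover: "\<Union>B = pdb_facts P"
    and blocks_disjoint: "\<And>X Y. X \<in> B \<Longrightarrow> Y \<in> B \<Longrightarrow> X \<noteq> Y \<Longrightarrow> X \<inter> Y = {}"
    and prob_independent: "\<And>F. finite F \<Longrightarrow> F \<subseteq> pdb_facts P \<Longrightarrow>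
           (\<forall>f\<in>F. \<forall>f'\<in>F. \<forall>X\<in>B. f \<noteq> f' \<and> f \<in> X \<longrightarrow> f' \<notin> X) \<Longrightarrow>
           measure_pmf.prob P {I. F \<subseteq> I} = (\<Prod>f\<in>F. measure_pmf.prob P {I. f \<in> I})"
    and blocks_exclusive: "\<And>X f f'. X \<in> B \<Longrightarrow> f \<in> X \<Longrightarrow> f' \<in> X \<Longrightarrow> f \<noteq> f' \<Longrightarrow>
           measure_pmf.prob P {I. f \<in> I \<and> f' \<in> I} = 0"
begin

abbreviation pr :: "'u fact set set \<Rightarrow> real" where
  "pr E \<equiv> measure_pmf.prob P E"

definition independent_facts :: "'u fact set \<Rightarrow> bool" where
  "independent_facts F \<longleftrightarrow> F \<subseteq> pdb_facts P \<and> (\<forall>f\<in>F. \<forall>f'\<in>F. \<forall>X\<in>B. f \<noteq> f' \<and> f \<in> X \<longrightarrow> f' \<notin> X)"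

lemma instance_subset_facts: "D \<in> set_pmf P \<Longrightarrow> D \<subseteq> pdb_facts P"
  unfolding pdb_facts_def by auto

lemma one_fact_per_block:
  assumes "D \<in> set_pmf P" "X \<in> B" "f \<in> D \<inter> X" "f' \<in> D \<inter> X"
  shows "f = f'"
proof (rule ccontr)
  assume "f \<noteq> f'"
  then have "pr {I. f \<in> I \<and> f' \<in> I} = 0" using assms(2-4) blocks_exclusive by blast
  then show False using assms(1,3,4) by (auto simp: measure_pmf_zero_iff)
qed

lemma independent_factsI:
  assumes "F \<subseteq> pdb_facts P"
    and "\<And>f f' X. f \<in> F \<Longrightarrow> f' \<in> F \<Longrightarrow> X \<in> B \<Longrightarrow> f \<in> X \<Longrightarrow> f' \<in> X \<Longrightarrow> f = f'"
  shows "independent_facts F"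
  using assms unfolding independent_facts_def by blast

lemma independent_factsD:
  assumes "independent_facts F"
  shows "F \<subseteq> pdb_facts P"
    and "\<And>f f' X. f \<in> F \<Longrightarrow> f' \<in> F \<Longrightarrow> X \<in> B \<Longrightarrow> f \<in> X \<Longrightarrow> f' \<in> X \<Longrightarrow> f = f'"
  using assms unfolding independent_facts_def by blast+

lemma independent_facts_subset:
  assumes "independent_facts F" "G \<subseteq> F"
  shows "independent_facts G"
proof (rule independent_factsI)
  show "G \<subseteq> pdb_facts P" using independent_factsD(1)[OF assms(1)] assms(2) by blast
  show "f = f'" if "f \<in> G" "f' \<in> G" "X \<in> B" "f \<in> X" "f' \<in> X" for f f' X
    using independent_factsD(2)[OF assms(1)] that assms(2) by blast
qed

lemma prob_superset_not_independent:
  assumes "\<not> independent_facts F"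
  shows "pr {I. F \<subseteq> I} = 0"
proof -
  have "\<not> F \<subseteq> D" if D: "D \<in> set_pmf P" for D
  proof
    assume "F \<subseteq> D"
    then have "independent_facts F"
      using instance_subset_facts[OF D] one_fact_per_block[OF D] by (intro independent_factsI) blast+
    with assms show False by contradiction
  qed
  then show ?thesis by (auto simp: measure_pmf_zero_iff)
qed

lemma prob_superset_independent:
  assumes "finite F" "independent_facts F"
  shows "pr {I. F \<subseteq> I} = (\<Prod>f\<in>F. pr {I. f \<in> I})"
proof -
  have F: "F \<subseteq> pdb_facts P \<and> (\<forall>f\<in>F. \<forall>f'\<in>F. \<forall>X\<in>B. f \<noteq> f' \<and> f \<in> X \<longrightarrow> f' \<notin> X)"
    using assms(2) unfolding independent_facts_def .
  show ?thesis by (rule prob_independent[OF assms(1) conjunct1[OF F] conjunct2[OF F]])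
qed

lemma independent_facts_Un_block:
  assumes F: "independent_facts F" "F \<inter> X = {}" and G: "independent_facts G" "G \<subseteq> X"
    and X: "X \<in> B"
  shows "independent_facts (F \<union> G)"
proof (rule independent_factsI)
  show "F \<union> G \<subseteq> pdb_facts P" using independent_factsD(1) F(1) G(1) by blast
  fix f f' Y assume f: "f \<in> F \<union> G" "f' \<in> F \<union> G" and Y: "Y \<in> B" "f \<in> Y" "f' \<in> Y"
  have "Y = X" if "f \<in> G \<or> f' \<in> G"
    using that Y G(2) blocks_disjoint[OF Y(1) X] by blast
  then consider "f \<in> F" "f' \<in> F" | "f \<in> G" "f' \<in> G"
    using f Y F(2) by blast
  then show "f = f'"
  proof cases
    case 1 then show ?thesis using independent_factsD(2)[OF F(1)] Y by blast
  next
    case 2 then show ?thesis using independent_factsD(2)[OF G(1)] Y by blast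
  qed
qed

lemma prob_superset_Un_block:
  assumes X: "X \<in> B" and F: "finite F" "F \<inter> X = {}" and G: "finite G" "G \<subseteq> X"
  shows "pr {I. F \<union> G \<subseteq> I} = pr {I. F \<subseteq> I} * pr {I. G \<subseteq> I}"
proof (cases "independent_facts F \<and> independent_facts G")
  case True
  then have "independent_facts (F \<union> G)" using independent_facts_Un_block X F G by blast
  then have "pr {I. F \<union> G \<subseteq> I} = (\<Prod>f\<in>F \<union> G. pr {I. f \<in> I})"
    using F G by (intro prob_superset_independent) auto
  also have "\<dots> = (\<Prod>f\<in>F. pr {I. f \<in> I}) * (\<Prod>f\<in>G. pr {I. f \<in> I})"
    using F G by (intro prod.union_disjoint) auto
  finally show ?thesis
    using True F G by (simp add: prob_superset_independent)
next
  case False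
  then have "\<not> independent_facts (F \<union> G)"
    using independent_facts_subset by blast
  then have "pr {I. F \<union> G \<subseteq> I} = 0" by (rule prob_superset_not_independent)
  moreover have "pr {I. F \<subseteq> I} = 0 \<or> pr {I. G \<subseteq> I} = 0"
    using False prob_superset_not_independent by blast
  ultimately show ?thesis by auto
qed

lemma indep_set_block:
  assumes "X \<in> B"
  shows "prob_space.indep_set (measure_pmf P)
           (sigma_sets UNIV (cylinders (- X))) (sigma_sets UNIV (cylinders X))"
proof -
  have "prob_space.indep_set (measure_pmf P) (cylinders (- X)) (cylinders X)"
  proof (rule prob_space.indep_setI[OF prob_space_measure_pmf])
    fix a b assume "a \<in> cylinders (- X)" "b \<in> cylinders X"
    then obtain F G where a: "a = {I. F \<subseteq> I}" and F: "finite F" "F \<subseteq> - X"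
      and b: "b = {I. G \<subseteq> I}" and G: "finite G" "G \<subseteq> X"
      unfolding cylinders_def by blast
    have "pr (a \<inter> b) = pr {I. F \<union> G \<subseteq> I}"
      unfolding a b by (intro arg_cong[where f = pr]) auto
    also have "\<dots> = pr a * pr b"
      unfolding a b using F G by (intro prob_superset_Un_block[OF assms]) auto
    finally show "pr (a \<inter> b) = pr a * pr b" .
  qed simp_all
  then show ?thesis
    by (rule prob_space.indep_set_sigma_sets[OF prob_space_measure_pmf _ Int_stable_cylinders
        Int_stable_cylinders, unfolded space_measure_pmf])
qed

definition sure_block :: "'u fact set \<Rightarrow> bool" where
  "sure_block X \<longleftrightarrow> pr {I. I \<inter> X = {}} = 0"

text \<open>\<open>D - {f}\<close> is the only instance that agrees with \<open>D\<close> outside \<open>X\<close> and misses \<open>X\<close>;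
  these two events are independent and both have positive probability.\<close>
lemma remove_fact_from_unsure_block:
  assumes D: "D \<in> set_pmf P" and f: "f \<in> D" "f \<in> X" and X: "X \<in> B" and "\<not> sure_block X"
  shows "D - {f} \<in> set_pmf P"
proof -
  have D_X: "g = f" if "g \<in> D" "g \<in> X" for g
    using one_fact_per_block[OF D X] f that by blast
  define rest where "rest = {I. I \<inter> - X = D - {f}}"
  define empty where "empty = {I :: 'u fact set. I \<inter> X = {}}"
  have "rest \<in> sigma_sets UNIV (cylinders (- X))"
    unfolding rest_def by (rule trace_in_sigma_cylinders) (use f(2) D_X in blast)
  moreover have "empty \<in> sigma_sets UNIV (cylinders X)"
    unfolding empty_def by (rule trace_in_sigma_cylinders) simp
  ultimately have "pr (rest \<inter> empty) = pr rest * pr empty"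
    by (rule prob_space.indep_setD[OF prob_space_measure_pmf indep_set_block[OF X]])
  moreover have "rest \<inter> empty = {D - {f}}"
  proof (intro set_eqI iffI)
    fix I assume "I \<in> rest \<inter> empty"
    then have "I \<inter> - X = D - {f}" "I \<inter> X = {}" unfolding rest_def empty_def by auto
    moreover have "I = I \<inter> - X \<union> I \<inter> X" by blast
    ultimately show "I \<in> {D - {f}}" by simp
  next
    fix I assume "I \<in> {D - {f}}"
    then show "I \<in> rest \<inter> empty" unfolding rest_def empty_def using f D_X by blast
  qed
  moreover have "D \<in> rest"
    unfolding rest_def using f D_X by blast
  then have "pr rest > 0" by (rule measure_pmf_posI[OF D])
  moreover have "pr empty > 0"
    using \<open>\<not> sure_block X\<close> measure_nonneg[of "measure_pmf P" empty]
    unfolding sure_block_def empty_def by linarith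
  ultimately have "pr {D - {f}} > 0" by (metis mult_pos_pos)
  then show ?thesis by (simp add: measure_pmf_single pmf_positive_iff)
qed

lemma sub_instance_of_sure_facts:
  "D \<in> set_pmf P \<Longrightarrow> \<exists>M\<in>set_pmf P. M \<subseteq> D \<and> (\<forall>f\<in>M. \<forall>X\<in>B. f \<in> X \<longrightarrow> sure_block X)"
proof (induction "card D" arbitrary: D rule: less_induct)
  case less
  show ?case
  proof (cases "\<forall>f\<in>D. \<forall>X\<in>B. f \<in> X \<longrightarrow> sure_block X")
    case False
    then obtain f X where f: "f \<in> D" "f \<in> X" and X: "X \<in> B" "\<not> sure_block X" by blast
    have "card (D - {f}) < card D"
      using finite_instances[OF less.prems] f(1) by (rule card_Diff1_less)
    from less.hyps[OF this remove_fact_from_unsure_block[OF less.prems f X]]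
    obtain M where "M \<in> set_pmf P" "M \<subseteq> D - {f}" "\<forall>f\<in>M. \<forall>X\<in>B. f \<in> X \<longrightarrow> sure_block X"
      by blast
    then show ?thesis by blast
  next
    case True
    then show ?thesis using less.prems by blast
  qed
qed

text \<open>Every instance meets every sure block, and \<open>M\<close> meets each block at most once, so sending a
  fact of \<open>M\<close> to a fact of \<open>D\<close> in the same block is injective.\<close>
lemma card_instance_of_sure_facts_le:
  assumes M: "M \<in> set_pmf P" and sure: "\<forall>f\<in>M. \<forall>X\<in>B. f \<in> X \<longrightarrow> sure_block X"
    and D: "D \<in> set_pmf P"
  shows "card M \<le> card D"
proof -
  have "\<exists>g\<in>D. \<exists>X\<in>B. f \<in> X \<and> g \<in> X" if "f \<in> M" for f
  proof -
    have "f \<in> \<Union>B" using that instance_subset_facts[OF M] blocks_cover by auto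
    then obtain X where X: "X \<in> B" "f \<in> X" by blast
    then have "pr {I. I \<inter> X = {}} = 0" using sure that unfolding sure_block_def by blast
    then have "D \<inter> X \<noteq> {}" using D by (auto simp: measure_pmf_zero_iff)
    then show ?thesis using X by blast
  qed
  then obtain h where h: "\<And>f. f \<in> M \<Longrightarrow> h f \<in> D \<and> (\<exists>X\<in>B. f \<in> X \<and> h f \<in> X)"
    by metis
  have "inj_on h M"
  proof (rule inj_onI)
    fix f f' assume f: "f \<in> M" "f' \<in> M" "h f = h f'"
    obtain X Y where X: "X \<in> B" "f \<in> X" "h f \<in> X" and Y: "Y \<in> B" "f' \<in> Y" "h f \<in> Y"
      using h[OF f(1)] h[OF f(2)] f(3) by auto
    then have "X = Y" using blocks_disjoint by blast
    then show "f = f'"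
      using one_fact_per_block[OF M X(1)] X(2) Y(2) f(1,2) by blast
  qed
  with h show ?thesis
    using card_inj_on_le[of h M D] finite_instances[OF D] by blast
qed

lemma bounded_sub_instances: "\<exists>N. \<forall>D\<in>set_pmf P. \<exists>M\<in>set_pmf P. M \<subseteq> D \<and> card M \<le> N"
proof -
  obtain D0 where D0: "D0 \<in> set_pmf P" using set_pmf_not_empty[of P] by blast
  have "\<exists>M\<in>set_pmf P. M \<subseteq> D \<and> card M \<le> card D0" if "D \<in> set_pmf P" for D
    using sub_instance_of_sure_facts[OF that] card_instance_of_sure_facts_le[OF _ _ D0] by blast
  then show ?thesis by blast
qed

end

lemma is_BID_imp_block_independent:
  assumes "is_BID (S, P :: ('u::countable) fact set pmf)"
  obtains B where "block_independent P B"
proof -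
  from assms obtain B where cover: "\<Union>B = pdb_facts P"
    and disjoint: "\<forall>X\<in>B. \<forall>Y\<in>B. X \<noteq> Y \<longrightarrow> X \<inter> Y = {}"
    and independent: "\<forall>F. finite F \<and> F \<subseteq> pdb_facts P \<and>
        (\<forall>f\<in>F. \<forall>f'\<in>F. \<forall>X\<in>B. f \<noteq> f' \<and> f \<in> X \<longrightarrow> f' \<notin> X) \<longrightarrow>
        measure_pmf.prob P {I. F \<subseteq> I} = (\<Prod>f\<in>F. measure_pmf.prob P {I. f \<in> I})"
    and exclusive: "\<forall>X\<in>B. \<forall>f\<in>X. \<forall>f'\<in>X. f \<noteq> f' \<longrightarrow>
        measure_pmf.prob P {I. f \<in> I \<and> f' \<in> I} = 0"
    unfolding is_BID_def snd_conv by (elim conjE exE) blast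
  have pdb: "is_pdb (S, P)" using assms unfolding is_BID_def by (rule conjunct1)
  have "block_independent P B"
  proof
    show "finite D" if "D \<in> set_pmf P" for D
      using pdb that unfolding is_pdb_def instance_over_def by simp
    show "\<Union>B = pdb_facts P" by (fact cover)
    show "X \<inter> Y = {}" if "X \<in> B" "Y \<in> B" "X \<noteq> Y" for X Y
      using disjoint that by blast
    show "measure_pmf.prob P {I. F \<subseteq> I} = (\<Prod>f\<in>F. measure_pmf.prob P {I. f \<in> I})"
      if "finite F" "F \<subseteq> pdb_facts P" "\<forall>f\<in>F. \<forall>f'\<in>F. \<forall>X\<in>B. f \<noteq> f' \<and> f \<in> X \<longrightarrow> f' \<notin> X"
      for F
      using independent that by blast
    show "measure_pmf.prob P {I. f \<in> I \<and> f' \<in> I} = 0"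
      if "X \<in> B" "f \<in> X" "f' \<in> X" "f \<noteq> f'" for X f f'
      using exclusive that by blast
  qed
  then show ?thesis by (rule that)
qed

section \<open>Monotonicity of UCQ views\<close>

lemma sat_ucq_mono:
  "is_ucq \<phi> \<Longrightarrow> Dom \<subseteq> Dom' \<Longrightarrow> D \<subseteq> D' \<Longrightarrow> sat Dom D \<sigma> \<phi> \<Longrightarrow> sat Dom' D' \<sigma> \<phi>"
proof (induction \<phi> arbitrary: \<sigma>)
  case (Ex x \<phi>)
  then obtain a where "a \<in> Dom" "sat Dom D (\<sigma>(x := a)) \<phi>" by auto
  then show ?case using Ex by auto
qed auto

lemma adom_mono: "D \<subseteq> D' \<Longrightarrow> adom D \<subseteq> adom D'"
  unfolding adom_def by blast

lemma in_adomI: "(R, xs) \<in> D \<Longrightarrow> x \<in> set xs \<Longrightarrow> x \<in> adom D"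
  unfolding adom_def by force

lemma mem_view_apply:
  "(R, as) \<in> view_apply T \<Phi> D \<longleftrightarrow>
     R \<in> T \<and> length as = arity R \<and> set as \<subseteq> adom D \<union> fo_consts (\<Phi> R) \<and> sat_adom D (\<Phi> R) as"
  unfolding view_apply_def by blast

lemma view_apply_ucq_mono:
  assumes "\<forall>R\<in>T. is_ucq (\<Phi> R)" "D \<subseteq> D'"
  shows "view_apply T \<Phi> D \<subseteq> view_apply T \<Phi> D'"
proof (clarify)
  fix R as assume "(R, as) \<in> view_apply T \<Phi> D"
  then have R: "R \<in> T" "length as = arity R" "set as \<subseteq> adom D \<union> fo_consts (\<Phi> R)"
    and sat: "sat (adom D \<union> fo_consts (\<Phi> R)) D (\<lambda>i. as ! i) (\<Phi> R)"
    unfolding mem_view_apply sat_adom_def by blast+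
  have "adom D \<union> fo_consts (\<Phi> R) \<subseteq> adom D' \<union> fo_consts (\<Phi> R)"
    using adom_mono[OF assms(2)] by blast
  with R sat assms show "(R, as) \<in> view_apply T \<Phi> D'"
    unfolding mem_view_apply sat_adom_def by (blast intro: sat_ucq_mono)
qed

lemma adom_view_apply: "adom (view_apply T \<Phi> D) \<subseteq> adom D \<union> (\<Union>R\<in>T. fo_consts (\<Phi> R))"
  unfolding view_apply_def adom_def by fastforce

lemma finite_fo_consts: "finite (fo_consts \<phi>)"
proof -
  have "finite (trm_consts t)" for t :: "'a trm" by (cases t) auto
  then show ?thesis by (induction \<phi>) auto
qed

lemma finite_adom: "finite D \<Longrightarrow> finite (adom D)"
  unfolding adom_def by simp

lemma card_adom_le:
  assumes "instance_over S D" "finite S"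
  shows "card (adom D) \<le> card D * Max (arity ` S)"
proof -
  have "finite D" using assms(1) unfolding instance_over_def by blast
  then have "card (adom D) \<le> (\<Sum>f\<in>D. card (set (snd f)))"
    unfolding adom_def by (rule card_UN_le)
  also have "\<dots> \<le> (\<Sum>f\<in>D. Max (arity ` S))"
  proof (rule sum_mono)
    fix f assume "f \<in> D"
    then have "fst f \<in> S" "length (snd f) = arity (fst f)"
      using assms(1) unfolding instance_over_def fact_over_def by auto
    then show "card (set (snd f)) \<le> Max (arity ` S)"
      using assms(2) card_length[of "snd f"] by (metis Max_ge finite_imageI image_eqI le_trans)
  qed
  finally show ?thesis by simp
qed

lemma card_adom_view_apply_le:
  fixes \<Phi> :: "rel \<Rightarrow> 'a fo"
  assumes "instance_over S D" "finite S" "finite T"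
  defines "C \<equiv> \<Union>R\<in>T. fo_consts (\<Phi> R)"
  shows "finite (adom (view_apply T \<Phi> D))"
    and "card (adom (view_apply T \<Phi> D)) \<le> card D * Max (arity ` S) + card C"
proof -
  have sub: "adom (view_apply T \<Phi> D) \<subseteq> adom D \<union> C"
    unfolding C_def by (rule adom_view_apply)
  have fin: "finite (adom D \<union> C)"
    using assms(1,3) unfolding C_def instance_over_def by (simp add: finite_adom finite_fo_consts)
  then show "finite (adom (view_apply T \<Phi> D))" using sub by (rule finite_subset[rotated])
  have "card (adom (view_apply T \<Phi> D)) \<le> card (adom D) + card C"
    using card_mono[OF fin sub] card_Un_le[of "adom D" C] by linarith
  then show "card (adom (view_apply T \<Phi> D)) \<le> card D * Max (arity ` S) + card C"
    using card_adom_le[OF assms(1,2)] by linarith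
qed

definition bounded_adom_sub_instances :: "'u fact set pmf \<Rightarrow> bool" where
  "bounded_adom_sub_instances P \<longleftrightarrow>
     (\<exists>N. \<forall>D\<in>set_pmf P. \<exists>M\<in>set_pmf P. M \<subseteq> D \<and> finite (adom M) \<and> card (adom M) \<le> N)"

lemma ucq_image_bounded_adom_sub_instances:
  assumes ucq: "ucq_view S T \<Phi>" and pdb: "is_pdb (S, P)"
    and N: "\<forall>D\<in>set_pmf P. \<exists>M\<in>set_pmf P. M \<subseteq> D \<and> card M \<le> N"
  shows "bounded_adom_sub_instances (map_pmf (view_apply T \<Phi>) P)"
proof -
  have "finite S" using pdb unfolding is_pdb_def schema_def by simp
  have "finite T" using ucq unfolding ucq_view_def fo_view_def schema_def by blast
  let ?V = "view_apply T \<Phi>"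
  let ?N = "N * Max (arity ` S) + card (\<Union>R\<in>T. fo_consts (\<Phi> R))"
  have "\<exists>M'\<in>?V ` set_pmf P. M' \<subseteq> ?V D \<and> finite (adom M') \<and> card (adom M') \<le> ?N"
    if D: "D \<in> set_pmf P" for D
  proof -
    obtain M where M: "M \<in> set_pmf P" "M \<subseteq> D" "card M \<le> N" using N D by blast
    have inst: "instance_over S M" using pdb M(1) unfolding is_pdb_def by simp
    have "?V M \<subseteq> ?V D"
      using ucq unfolding ucq_view_def by (intro view_apply_ucq_mono[OF _ M(2)]) blast
    moreover have "card (adom (?V M)) \<le> ?N"
      using card_adom_view_apply_le(2)[OF inst \<open>finite S\<close> \<open>finite T\<close>, of \<Phi>] M(3)
        mult_le_mono1[OF M(3), of "Max (arity ` S)"] by linarith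
    ultimately show ?thesis
      using M(1) card_adom_view_apply_le(1)[OF inst \<open>finite S\<close> \<open>finite T\<close>] by blast
  qed
  then show ?thesis
    unfolding bounded_adom_sub_instances_def set_map_pmf by (intro exI[of _ ?N]) blast
qed

lemma UCQ_BID_bounded_adom_sub_instances:
  assumes "\<D> \<in> (UCQ_BID :: ('u::countable) pdb set)"
  shows "bounded_adom_sub_instances (snd \<D>)"
proof -
  obtain T \<Phi> S P where \<D>: "\<D> = pdb_image T \<Phi> (S, P)" and BID: "is_BID (S, P :: 'u fact set pmf)"
    and ucq: "ucq_view S T \<Phi>"
    using assms unfolding UCQ_BID_def by fastforce
  obtain B where "block_independent P B" using is_BID_imp_block_independent[OF BID] .
  then obtain N where N: "\<forall>D\<in>set_pmf P. \<exists>M\<in>set_pmf P. M \<subseteq> D \<and> card M \<le> N"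
    using block_independent.bounded_sub_instances by blast
  have pdb: "is_pdb (S, P)" using BID unfolding is_BID_def by (rule conjunct1)
  show ?thesis
    unfolding \<D> pdb_image_def snd_conv by (rule ucq_image_bounded_adom_sub_instances[OF ucq pdb N])
qed

section \<open>A random successor chain with marked endpoints\<close>

definition node :: "nat \<Rightarrow> 'u::infinite" where
  "node = (SOME f. inj f)"

lemma inj_node: "inj (node :: nat \<Rightarrow> 'u::infinite)"
proof -
  have "\<exists>f :: nat \<Rightarrow> 'u. inj f"
    using infinite_iff_countable_subset[of "UNIV :: 'u set"] infinite_UNIV by blast
  then show ?thesis unfolding node_def by (rule someI_ex)
qed

lemma node_eq_iff [simp]: "node i = (node j :: 'u::infinite) \<longleftrightarrow> i = j"
  using inj_node by (auto dest: injD)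

definition succ_rel :: rel where "succ_rel = (0, 2)"
definition copy_rel :: rel where "copy_rel = (1, 2)"
definition start_rel :: rel where "start_rel = (2, 1)"
definition end_rel :: rel where "end_rel = (3, 1)"
definition empty_rel :: rel where "empty_rel = (4, 0)"

lemma arity_rels [simp]:
  "arity succ_rel = 2" "arity copy_rel = 2" "arity start_rel = 1" "arity end_rel = 1"
  "arity empty_rel = 0"
  by (simp_all add: arity_def succ_rel_def copy_rel_def start_rel_def end_rel_def empty_rel_def)

lemma rels_distinct [simp]:
  "copy_rel \<noteq> start_rel" "copy_rel \<noteq> end_rel" "copy_rel \<noteq> empty_rel"
  "start_rel \<noteq> end_rel" "start_rel \<noteq> empty_rel" "end_rel \<noteq> empty_rel"
  "start_rel \<noteq> copy_rel" "end_rel \<noteq> copy_rel" "empty_rel \<noteq> copy_rel"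
  "end_rel \<noteq> start_rel" "empty_rel \<noteq> start_rel" "empty_rel \<noteq> end_rel"
  by (simp_all add: copy_rel_def start_rel_def end_rel_def empty_rel_def)

definition succ_fact :: "nat \<Rightarrow> ('u::infinite) fact" where
  "succ_fact k = (succ_rel, [node k, node (Suc k)])"

lemma inj_succ_fact: "inj (succ_fact :: nat \<Rightarrow> ('u::infinite) fact)"
  by (rule injI) (simp add: succ_fact_def)

lemma succ_in_succ_fact_image:
  "(succ_rel, [x, y]) \<in> succ_fact ` A \<longleftrightarrow> (\<exists>k\<in>A. x = node k \<and> y = node (Suc k))"
  unfolding succ_fact_def by auto

definition succ_atom :: "nat \<Rightarrow> nat \<Rightarrow> 'u fo" where
  "succ_atom i j = Atom succ_rel [Var i, Var j]"

text \<open>The start, end and emptiness markers use negation. They make the view of a chain of length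
  \<open>n\<close> contain the view of no other chain (\<open>mark_succ_facts_subset_imp_eq\<close>).\<close>
definition marker_view :: "rel \<Rightarrow> 'u fo" where
  "marker_view R =
     (if R = copy_rel then succ_atom 0 1
      else if R = start_rel then Conj (Ex 1 (succ_atom 0 1)) (Neg (Ex 1 (succ_atom 1 0)))
      else if R = end_rel then Conj (Ex 1 (succ_atom 1 0)) (Neg (Ex 1 (succ_atom 0 1)))
      else Neg (Ex 0 (Ex 1 (succ_atom 0 1))))"

definition marker_schema :: "rel set" where
  "marker_schema = {copy_rel, start_rel, end_rel, empty_rel}"

abbreviation mark :: "('u::infinite) fact set \<Rightarrow> 'u fact set" where
  "mark \<equiv> view_apply marker_schema marker_view"

lemma marker_view_simps [simp]:
  "marker_view copy_rel = succ_atom 0 1"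
  "marker_view start_rel = Conj (Ex 1 (succ_atom 0 1)) (Neg (Ex 1 (succ_atom 1 0)))"
  "marker_view end_rel = Conj (Ex 1 (succ_atom 1 0)) (Neg (Ex 1 (succ_atom 0 1)))"
  "marker_view empty_rel = Neg (Ex 0 (Ex 1 (succ_atom 0 1)))"
  unfolding marker_view_def by simp_all

lemma succ_atom_simps [simp]:
  "fo_consts (succ_atom i j) = {}"
  "fo_free (succ_atom i j) = {i, j}"
  "fo_over S (succ_atom i j) \<longleftrightarrow> succ_rel \<in> S"
  "sat Dom D \<sigma> (succ_atom i j) \<longleftrightarrow> (succ_rel, [\<sigma> i, \<sigma> j]) \<in> D"
  by (auto simp: succ_atom_def)

lemma succ_in_adom: "(succ_rel, [x, y]) \<in> D \<Longrightarrow> x \<in> adom D \<and> y \<in> adom D"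
  using in_adomI[of succ_rel "[x, y]" D] by simp

lemma mark_copy: "(copy_rel, [x, y]) \<in> mark D \<longleftrightarrow> (succ_rel, [x, y]) \<in> D"
  by (auto simp: mem_view_apply sat_adom_def marker_schema_def dest: succ_in_adom)

lemma mark_start:
  "(start_rel, [x]) \<in> mark D \<longleftrightarrow> (\<exists>y. (succ_rel, [x, y]) \<in> D) \<and> \<not> (\<exists>y. (succ_rel, [y, x]) \<in> D)"
  by (auto simp: mem_view_apply sat_adom_def marker_schema_def dest: succ_in_adom)

lemma mark_end:
  "(end_rel, [x]) \<in> mark D \<longleftrightarrow> (\<exists>y. (succ_rel, [y, x]) \<in> D) \<and> \<not> (\<exists>y. (succ_rel, [x, y]) \<in> D)"
  by (auto simp: mem_view_apply sat_adom_def marker_schema_def dest: succ_in_adom)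

lemma mark_empty: "(empty_rel, []) \<in> mark D \<longleftrightarrow> \<not> (\<exists>x y. (succ_rel, [x, y]) \<in> D)"
  by (auto simp: mem_view_apply sat_adom_def marker_schema_def dest: succ_in_adom)

lemma atMost_subset_if_pred_closed:
  fixes A :: "nat set"
  assumes "b \<in> A" and pred: "\<And>k. k \<in> A \<Longrightarrow> 0 < k \<Longrightarrow> k - 1 \<in> A"
  shows "{..b} \<subseteq> A"
proof -
  have "j \<in> A" if "m \<in> A" "j \<le> m" for j m
    using that
  proof (induction m)
    case (Suc m)
    then show ?case using pred[OF Suc.prems(1)] by (cases "j = Suc m") auto
  qed simp
  then show ?thesis using assms(1) by blast
qed

lemma mark_succ_facts_subset_imp_eq:
  assumes "finite A" and sub: "mark (succ_fact ` A) \<subseteq> (mark (succ_fact ` {..<n}) :: ('u::infinite) fact set)"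
  shows "A = {..<n}"
proof (cases "A = {}")
  case True
  then have "(empty_rel, []) \<in> (mark (succ_fact ` {..<n}) :: 'u fact set)"
    using sub mark_empty[of "succ_fact ` A"] by (auto simp: succ_in_succ_fact_image)
  then have "n = 0"
    unfolding mark_empty succ_in_succ_fact_image by (cases n) auto
  then show ?thesis using True by simp
next
  case False
  define b where "b = Max A"
  have b: "b \<in> A" "\<And>k. k \<in> A \<Longrightarrow> k \<le> b"
    using assms(1) False unfolding b_def by auto
  have "(end_rel, [node (Suc b)]) \<in> (mark (succ_fact ` A) :: 'u fact set)"
    unfolding mark_end succ_in_succ_fact_image using b by fastforce
  then have "(end_rel, [node (Suc b)]) \<in> (mark (succ_fact ` {..<n}) :: 'u fact set)"
    using sub by blast
  then have n: "n = Suc b"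
    unfolding mark_end succ_in_succ_fact_image by (auto simp: not_less_eq)
  have "k - 1 \<in> A" if k: "k \<in> A" "0 < k" for k
  proof (rule ccontr)
    assume "k - 1 \<notin> A"
    then have "(start_rel, [node k]) \<in> (mark (succ_fact ` A) :: 'u fact set)"
      unfolding mark_start succ_in_succ_fact_image using k by auto
    then have "(start_rel, [node k]) \<in> (mark (succ_fact ` {..<n}) :: 'u fact set)"
      using sub by blast
    moreover have "(succ_rel, [node (k - 1), node k]) \<in> (succ_fact ` {..<n} :: 'u fact set)"
      unfolding succ_in_succ_fact_image using k b(2)[OF k(1)] n by (intro bexI[of _ "k - 1"]) auto
    ultimately show False unfolding mark_start by blast
  qed
  then have "{..b} \<subseteq> A" using atMost_subset_if_pred_closed b(1) by blast
  moreover have "A \<subseteq> {..b}" using b(2) by blast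
  ultimately show ?thesis unfolding n lessThan_Suc_atMost by blast
qed

lemma node_image_subset_adom_mark:
  "(node ` {..<n} :: ('u::infinite) set) \<subseteq> adom (mark (succ_fact ` {..<n}))"
proof
  fix x :: 'u assume "x \<in> node ` {..<n}"
  then obtain k where "k < n" "x = node k" by blast
  then have "(copy_rel, [x, node (Suc k)]) \<in> (mark (succ_fact ` {..<n}) :: 'u fact set)"
    unfolding mark_copy succ_in_succ_fact_image by blast
  then show "x \<in> adom (mark (succ_fact ` {..<n}))" by (rule in_adomI) simp
qed

definition chain_instance_pmf :: "('u::infinite) fact set pmf" where
  "chain_instance_pmf = map_pmf ((`) succ_fact) chain_subset_pmf"

definition chain_pdb :: "('u::infinite) pdb" where
  "chain_pdb = pdb_image marker_schema marker_view ({succ_rel}, chain_instance_pmf)"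

lemma prob_superset_chain_instance_pmf:
  assumes "finite K"
  shows "measure_pmf.prob (chain_instance_pmf :: ('u::infinite) fact set pmf) {I. succ_fact ` K \<subseteq> I} =
    (\<Prod>k\<in>K. edge_prob k)"
proof -
  have "(`) (succ_fact :: nat \<Rightarrow> 'u fact) -` {I. succ_fact ` K \<subseteq> I} = {A. K \<subseteq> A}"
    using inj_image_subset_iff[OF inj_succ_fact] by auto
  then show ?thesis
    unfolding chain_instance_pmf_def measure_map_pmf
    by (simp only: prob_superset_chain_subset_pmf[OF assms])
qed

lemma prob_member_chain_instance_pmf:
  "measure_pmf.prob (chain_instance_pmf :: ('u::infinite) fact set pmf) {I. succ_fact k \<in> I} = edge_prob k"
  using prob_superset_chain_instance_pmf[of "{k}"] by simp

lemma is_BID_tuple_independent: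
  assumes "is_pdb (S, P)"
    and "\<And>F. finite F \<Longrightarrow> F \<subseteq> pdb_facts P \<Longrightarrow>
           measure_pmf.prob P {I. F \<subseteq> I} = (\<Prod>f\<in>F. measure_pmf.prob P {I. f \<in> I})"
  shows "is_BID (S, P)"
  unfolding is_BID_def snd_conv
proof (intro conjI exI[of _ "(\<lambda>f. {f}) ` pdb_facts P"])
  show "\<forall>F. finite F \<and> F \<subseteq> pdb_facts P \<and>
      (\<forall>f\<in>F. \<forall>f'\<in>F. \<forall>X\<in>(\<lambda>f. {f}) ` pdb_facts P. f \<noteq> f' \<and> f \<in> X \<longrightarrow> f' \<notin> X) \<longrightarrow>
      measure_pmf.prob P {I. F \<subseteq> I} = (\<Prod>f\<in>F. measure_pmf.prob P {I. f \<in> I})"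
    by (intro allI impI, elim conjE) (rule assms(2))
qed (fact assms(1) | blast)+

lemma is_BID_chain: "is_BID ({succ_rel}, chain_instance_pmf :: ('u::infinite) fact set pmf)"
proof (rule is_BID_tuple_independent)
  have "finite D" "D \<subseteq> range succ_fact" if "D \<in> set_pmf (chain_instance_pmf :: 'u fact set pmf)" for D
    using that finite_set_chain_subset_pmf by (auto simp: chain_instance_pmf_def)
  then show "is_pdb ({succ_rel}, chain_instance_pmf :: 'u fact set pmf)"
    unfolding is_pdb_def schema_def instance_over_def fact_over_def
    by (fastforce simp: succ_fact_def)
  fix F :: "'u fact set" assume F: "finite F" "F \<subseteq> pdb_facts chain_instance_pmf"
  then have "F \<subseteq> range succ_fact"
    unfolding pdb_facts_def chain_instance_pmf_def by auto
  then obtain K where K: "F = succ_fact ` K" by (rule subset_imageE)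
  then have "finite K" using F(1) finite_image_iff inj_on_subset[OF inj_succ_fact] by blast
  have "measure_pmf.prob chain_instance_pmf {I. F \<subseteq> I} = (\<Prod>k\<in>K. edge_prob k)"
    unfolding K by (rule prob_superset_chain_instance_pmf[OF \<open>finite K\<close>])
  also have "\<dots> = (\<Prod>k\<in>K. measure_pmf.prob chain_instance_pmf {I :: 'u fact set. succ_fact k \<in> I})"
    by (simp add: prob_member_chain_instance_pmf)
  also have "\<dots> = (\<Prod>f\<in>F. measure_pmf.prob chain_instance_pmf {I. f \<in> I})"
    unfolding K by (simp add: prod.reindex inj_on_subset[OF inj_succ_fact])
  finally show "measure_pmf.prob chain_instance_pmf {I. F \<subseteq> I} =
      (\<Prod>f\<in>F. measure_pmf.prob chain_instance_pmf {I. f \<in> I})" .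
qed

lemma chain_pdb_in_FO_BID: "(chain_pdb :: ('u::infinite) pdb) \<in> FO_BID"
proof -
  have "fo_view {succ_rel} marker_schema (marker_view :: rel \<Rightarrow> 'u fo)"
    unfolding fo_view_def schema_def marker_schema_def by auto
  then show ?thesis
    unfolding FO_BID_def chain_pdb_def using is_BID_chain by fastforce
qed

lemma chain_pdb_unbounded: "\<not> bounded_adom_sub_instances (snd (chain_pdb :: ('u::infinite) pdb))"
proof
  assume "bounded_adom_sub_instances (snd (chain_pdb :: 'u pdb))"
  then obtain N where N: "\<forall>D\<in>set_pmf (snd (chain_pdb :: 'u pdb)). \<exists>M\<in>set_pmf (snd chain_pdb).
      M \<subseteq> D \<and> finite (adom M) \<and> card (adom M) \<le> N"
    unfolding bounded_adom_sub_instances_def by blast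
  have support: "set_pmf (snd (chain_pdb :: 'u pdb)) = (\<lambda>A. mark (succ_fact ` A)) ` set_pmf chain_subset_pmf"
    by (simp add: chain_pdb_def pdb_image_def chain_instance_pmf_def image_image)
  define n where "n = Suc N"
  have "mark (succ_fact ` {..<n}) \<in> set_pmf (snd (chain_pdb :: 'u pdb))"
    unfolding support using lessThan_in_set_chain_subset_pmf by blast
  then obtain M where M: "M \<in> set_pmf (snd (chain_pdb :: 'u pdb))" "M \<subseteq> mark (succ_fact ` {..<n})"
    "finite (adom M)" "card (adom M) \<le> N"
    using N by blast
  then obtain A where A: "A \<in> set_pmf chain_subset_pmf" "M = mark (succ_fact ` A)"
    unfolding support by blast
  then have "A = {..<n}"
    using mark_succ_facts_subset_imp_eq[OF finite_set_chain_subset_pmf[OF A(1)]] M(2) by blast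
  then have "node ` {..<n} \<subseteq> adom M"
    using A(2) node_image_subset_adom_mark by blast
  then have "card (node ` {..<n} :: 'u set) \<le> card (adom M)"
    using M(3) by (rule card_mono[rotated])
  moreover have "card (node ` {..<n} :: 'u set) = n"
    by (simp add: card_image[OF inj_on_subset[OF inj_node subset_UNIV]])
  ultimately show False using M(4) unfolding n_def by linarith
qed

theorem proposition7p14:
  "(UCQ_BID :: ('u :: {countable, infinite}) pdb set) \<subset> FO_BID"
proof
  show "(UCQ_BID :: 'u pdb set) \<subseteq> FO_BID"
    unfolding UCQ_BID_def FO_BID_def ucq_view_def by blast
  have "chain_pdb \<in> (FO_BID :: 'u pdb set) - UCQ_BID"
    using chain_pdb_in_FO_BID chain_pdb_unbounded UCQ_BID_bounded_adom_sub_instances by blast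
  then show "(UCQ_BID :: 'u pdb set) \<noteq> FO_BID" by blast
qed

end
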